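(* Let $\Omega_2=\{\omega_1,\omega_2\}$ with $\omega_1\neq\omega_2$, and $\mathcal{A}_2=2^{\Omega_2}$. A $q$-measure $\mu$ on $\mathcal{A}_2$ actualizes the coevent $\omega_1^*\omega_2^*$ if and only if $\mu(\{\omega_1\})=\mu(\{\omega_2\})=0$ and $\mu(\Omega_2)>0$.
   Context: Let $\Omega$ be a finite nonempty set and $\mathcal{A}=2^\Omega$. A coevent is a map $\phi:\mathcal{A}\to\{0,1\}$ with $\phi(\emptyset)=0$. For $\omega\in\Omega$ the evaluation map $\omega^*$ is the coevent with $\omega^*(A)=1$ if $\omega\in A$ and $0$ otherwise. Coevents are combined pointwise: $(\phi\oplus\psi)(A)=\phi(A)+\psi(A) \bmod 2$ and $(\phi\psi)(A)=\phi(A)\psi(A)$. For $f:\Omega\to[0,\infty)$ and a coevent $\phi$, the $q$-integral is $\int f\,d\phi=\int_0^\infty \phi(\{\omega\in\Omega: f(\omega)>\lambda\})\,d\lambda$ (Lebesgue measure in $\lambda$), and for $A\in\mathcal{A}$, $\int_A f\,d\phi=\int f\chi_A\,d\phi$. A $q$-measure is a map $\mu:\mathcal{A}\to[0,\infty)$ such that for all pairwise disjoint $A,B,C\in\mathcal{A}$: $\mu(A\cup B\cup C)=\mu(A\cup B)+\mu(A\cup C)+\mu(B\cup C)-\mu(A)-\mu(B)-\mu(C)$. The $q$-measure $\mu$ actualizes $\phi$ if there is a symmetric function $f:\Omega\times\Omega\to(0,\infty)$ such that for all $A\in\mathcal{A}$, $\mu(A)=\int g_A\,d\phi$, where $g_A(\omega')=\int_A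 f(\cdot,\omega')\,d\phi$ (the $q$-integral over $A$ of $\omega\mapsto f(\omega,\omega')$). *)

theory Defs
  imports "HOL-Analysis.Analysis"
begin

text \<open>A coevent is a map
  from events to {0,1}; we encode {0,1} as bool (1 = True), so that the
  pointwise product is conjunction and addition mod 2 is exclusive or.
  Only the values on subsets of Omega are relevant.\<close>

definition coevent :: "'a set \<Rightarrow> ('a set \<Rightarrow> bool) \<Rightarrow> bool" where
  "coevent \<Omega> \<phi> \<longleftrightarrow> \<not> \<phi> {}"

definition eval_map :: "'a \<Rightarrow> ('a set \<Rightarrow> bool)" where
  "eval_map \<omega> = (\<lambda>A. \<omega> \<in> A)"

definition coev_sum :: "('a set \<Rightarrow> bool) \<Rightarrow> ('a set \<Rightarrow> bool) \<Rightarrow> ('a set \<Rightarrow> bool)" where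
  "coev_sum \<phi> \<psi> = (\<lambda>A. \<phi> A \<noteq> \<psi> A)"

definition coev_prod :: "('a set \<Rightarrow> bool) \<Rightarrow> ('a set \<Rightarrow> bool) \<Rightarrow> ('a set \<Rightarrow> bool)" where
  "coev_prod \<phi> \<psi> = (\<lambda>A. \<phi> A \<and> \<psi> A)"

definition q_integral :: "'a set \<Rightarrow> ('a \<Rightarrow> real) \<Rightarrow> ('a set \<Rightarrow> bool) \<Rightarrow> real" where
  "q_integral \<Omega> f \<phi> = (LBINT l:{0..}. of_bool (\<phi> {\<omega>\<in>\<Omega>. f \<omega> > l}))"

definition q_integral_on :: "'a set \<Rightarrow> 'a set \<Rightarrow> ('a \<Rightarrow> real) \<Rightarrow> ('a set \<Rightarrow> bool) \<Rightarrow> real" where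
  "q_integral_on \<Omega> A f \<phi> = q_integral \<Omega> (\<lambda>\<omega>. f \<omega> * indicator A \<omega>) \<phi>"

definition q_measure :: "'a set \<Rightarrow> ('a set \<Rightarrow> real) \<Rightarrow> bool" where
  "q_measure \<Omega> \<mu> \<longleftrightarrow>
     (\<forall>A\<in>Pow \<Omega>. \<mu> A \<ge> 0) \<and>
     (\<forall>A\<in>Pow \<Omega>. \<forall>B\<in>Pow \<Omega>. \<forall>C\<in>Pow \<Omega>.
        A \<inter> B = {} \<and> A \<inter> C = {} \<and> B \<inter> C = {} \<longrightarrow>
        \<mu> (A \<union> B \<union> C) = \<mu> (A \<union> B) + \<mu> (A \<union> C) + \<mu> (B \<union> C) - \<mu> A - \<mu> B - \<mu> C)"

definition actualizes :: "'a set \<Rightarrow> ('a set \<Rightarrow> real) \<Rightarrow> ('a set \<Rightarrow> bool) \<Rightarrow> bool" where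
  "actualizes \<Omega> \<mu> \<phi> \<longleftrightarrow>
     (\<exists>f :: 'a \<Rightarrow> 'a \<Rightarrow> real.
        (\<forall>\<omega>\<in>\<Omega>. \<forall>\<omega>'\<in>\<Omega>. f \<omega> \<omega>' = f \<omega>' \<omega> \<and> f \<omega> \<omega>' > 0) \<and>
        (\<forall>A\<in>Pow \<Omega>. \<mu> A =
           q_integral \<Omega> (\<lambda>\<omega>'. q_integral_on \<Omega> A (\<lambda>\<omega>. f \<omega> \<omega>') \<phi>) \<phi>))"

end

theory Submission
  imports Defs
begin

text \<open>
  For the coevent \<open>\<phi> = \<omega>\<^sub>1\<^sup>* \<omega>\<^sub>2\<^sup>*\<close> on \<open>\<Omega> = {\<omega>\<^sub>1, \<omega>\<^sub>2}\<close> the set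
  \<open>{\<omega> \<in> \<Omega>. g \<omega> > \<lambda>}\<close> is charged by \<open>\<phi>\<close> exactly when \<open>\<lambda> < min (g \<omega>\<^sub>1) (g \<omega>\<^sub>2)\<close>, so
  the q-integral of \<open>g\<close> is \<open>max 0 (min (g \<omega>\<^sub>1) (g \<omega>\<^sub>2))\<close>.  Iterating this, the
  double q-integral defining an actualized q-measure of an event \<open>A\<close> is the
  minimum of the four values of the kernel \<open>f\<close> if \<open>A = \<Omega>\<close> and \<open>0\<close> otherwise.
  Hence every actualizing q-measure vanishes on the singletons and is positive
  on \<open>\<Omega>\<close>; conversely, if \<open>\<mu>\<close> has this shape then the constant kernel
  \<open>f = \<mu> \<Omega>\<close> actualizes it, using that every q-measure vanishes on \<open>{}\<close>.
\<close>

lemma lebesgue_integral_nonneg_below: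
  "(LBINT l:{0..}. of_bool (l < m)) = max 0 (m::real)"
proof -
  have integrand: "(\<lambda>l::real. indicator {0..} l *\<^sub>R (of_bool (l < m)::real))
      = indicator {0..<max 0 m}"
    by (rule ext) (auto simp: indicator_def)
  have "(LBINT l:{0..}. of_bool (l < m)) = measure lborel {0..<max 0 m}"
    unfolding set_lebesgue_integral_def integrand by simp
  also have "\<dots> = max 0 m"
    using measure_lborel_Ico[of 0 "max 0 m"] by simp
  finally show ?thesis .
qed

lemma q_integral_prod_eval_pair:
  "q_integral {a, b} g (coev_prod (eval_map a) (eval_map b)) = max 0 (min (g a) (g b))"
proof -
  have "coev_prod (eval_map a) (eval_map b) {\<omega> \<in> {a, b}. g \<omega> > l} = (l < min (g a) (g b))"
    for l by (auto simp: coev_prod_def eval_map_def)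
  then show ?thesis
    unfolding q_integral_def by (simp only: lebesgue_integral_nonneg_below)
qed

lemma q_integral_on_prod_eval_pair:
  "q_integral_on {a, b} A h (coev_prod (eval_map a) (eval_map b))
     = max 0 (min (h a * indicator A a) (h b * indicator A b))"
  unfolding q_integral_on_def by (rule q_integral_prod_eval_pair)

lemma double_q_integral_prod_eval_pair:
  assumes pos: "\<forall>\<omega>\<in>{a, b}. \<forall>\<omega>'\<in>{a, b}. f \<omega> \<omega>' > 0"
  shows "q_integral {a, b} (\<lambda>\<omega>'. q_integral_on {a, b} A (\<lambda>\<omega>. f \<omega> \<omega>')
             (coev_prod (eval_map a) (eval_map b))) (coev_prod (eval_map a) (eval_map b))
         = (if a \<in> A \<and> b \<in> A then min (min (f a a) (f b a)) (min (f a b) (f b b)) else 0)"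
proof -
  have "f a a > 0" "f a b > 0" "f b a > 0" "f b b > 0"
    using pos by auto
  then show ?thesis
    by (auto simp: q_integral_prod_eval_pair q_integral_on_prod_eval_pair indicator_def)
qed

lemma q_measure_empty:
  assumes "q_measure \<Omega> \<mu>"
  shows "\<mu> {} = 0"
proof -
  have "\<mu> ({} \<union> {} \<union> {}) = \<mu> ({} \<union> {}) + \<mu> ({} \<union> {}) + \<mu> ({} \<union> {}) - \<mu> {} - \<mu> {} - \<mu> {}"
    using assms unfolding q_measure_def by blast
  then show ?thesis by simp
qed

lemma q_measure_pair_singletons_null:
  assumes "a \<noteq> b" and "q_measure {a, b} \<mu>" and "\<mu> {a} = 0" and "\<mu> {b} = 0"
    and "A \<subseteq> {a, b}"
  shows "\<mu> A = (if a \<in> A \<and> b \<in> A then \<mu> {a, b} else 0)"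
proof -
  have "A = {} \<or> A = {a} \<or> A = {b} \<or> A = {a, b}"
    using assms(5) by (cases "a \<in> A"; cases "b \<in> A") auto
  then show ?thesis
    using assms(1,3,4) q_measure_empty[OF assms(2)] by auto
qed

theorem theorem4p2:
  fixes \<omega>1 \<omega>2 :: 'a and \<mu> :: "'a set \<Rightarrow> real"
  assumes "\<omega>1 \<noteq> \<omega>2"
    and "q_measure {\<omega>1, \<omega>2} \<mu>"
  shows "actualizes {\<omega>1, \<omega>2} \<mu> (coev_prod (eval_map \<omega>1) (eval_map \<omega>2)) \<longleftrightarrow>
         \<mu> {\<omega>1} = 0 \<and> \<mu> {\<omega>2} = 0 \<and> \<mu> {\<omega>1, \<omega>2} > 0"
proof
  assume "actualizes {\<omega>1, \<omega>2} \<mu> (coev_prod (eval_map \<omega>1) (eval_map \<omega>2))"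
  then obtain f where kernel: "\<forall>\<omega>\<in>{\<omega>1, \<omega>2}. \<forall>\<omega>'\<in>{\<omega>1, \<omega>2}. f \<omega> \<omega>' = f \<omega>' \<omega> \<and> f \<omega> \<omega>' > 0"
    and \<mu>_eq: "\<forall>A\<in>Pow {\<omega>1, \<omega>2}. \<mu> A = q_integral {\<omega>1, \<omega>2}
       (\<lambda>\<omega>'. q_integral_on {\<omega>1, \<omega>2} A (\<lambda>\<omega>. f \<omega> \<omega>') (coev_prod (eval_map \<omega>1) (eval_map \<omega>2)))
       (coev_prod (eval_map \<omega>1) (eval_map \<omega>2))"
    unfolding actualizes_def by blast
  have pos: "\<forall>\<omega>\<in>{\<omega>1, \<omega>2}. \<forall>\<omega>'\<in>{\<omega>1, \<omega>2}. f \<omega> \<omega>' > 0"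
    using kernel by blast
  have "\<mu> A = (if \<omega>1 \<in> A \<and> \<omega>2 \<in> A
      then min (min (f \<omega>1 \<omega>1) (f \<omega>2 \<omega>1)) (min (f \<omega>1 \<omega>2) (f \<omega>2 \<omega>2)) else 0)"
    if "A \<in> Pow {\<omega>1, \<omega>2}" for A
    using \<mu>_eq that double_q_integral_prod_eval_pair[OF pos] by simp
  moreover have "f \<omega>1 \<omega>1 > 0" "f \<omega>1 \<omega>2 > 0" "f \<omega>2 \<omega>1 > 0" "f \<omega>2 \<omega>2 > 0"
    using pos by auto
  ultimately show "\<mu> {\<omega>1} = 0 \<and> \<mu> {\<omega>2} = 0 \<and> \<mu> {\<omega>1, \<omega>2} > 0"
    using assms(1) by simp
next
  assume \<mu>_shape: "\<mu> {\<omega>1} = 0 \<and> \<mu> {\<omega>2} = 0 \<and> \<mu> {\<omega>1, \<omega>2} > 0"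
  define c where "c = \<mu> {\<omega>1, \<omega>2}"
  have pos: "\<forall>\<omega>\<in>{\<omega>1, \<omega>2}. \<forall>\<omega>'\<in>{\<omega>1, \<omega>2}. (\<lambda>_ _. c) \<omega> \<omega>' > 0"
    using \<mu>_shape by (simp add: c_def)
  have "\<mu> A = (if \<omega>1 \<in> A \<and> \<omega>2 \<in> A then c else 0)" if "A \<in> Pow {\<omega>1, \<omega>2}" for A
    using q_measure_pair_singletons_null[OF assms, of A] \<mu>_shape that unfolding c_def by simp
  then show "actualizes {\<omega>1, \<omega>2} \<mu> (coev_prod (eval_map \<omega>1) (eval_map \<omega>2))"
    unfolding actualizes_def using pos
    by (intro exI[of _ "\<lambda>_ _. c"]) (simp add: double_q_integral_prod_eval_pair[OF pos])
qed

end
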